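(* There is an absolute constant $C$ such that the following holds. In the negative-fill variable-processor cup game on $n$ cups against a greedy emptier, let $k,m$ be positive integers with $4k\mid m$ and $m\le n$, and suppose that currently at least $m$ cups have fill exactly $0$. Then the filler can ensure that after at most $Ck^3$ rounds at least $m/4$ cups have fill exactly $k/2$.
   Context: Negative-fill variable-processor cup game: real fills; each round the filler chooses an integer $1\le p\le n$ and reals $a_i\in[0,1]$ with $\sum a_i=p$ and adds $a_i$ to cup $i$; then the emptier chooses $p$ distinct cups and subtracts exactly $1$ from each (fills may become negative). The greedy emptier subtracts from the $p$ fullest cups after the filler's move. *)

theory Defs
  imports Main "HOL.Real"
begin

text \<open>Cups are indexed by 0..<n; a state is a fill function nat => real (values
  at indices >= n are irrelevant).\<close>

definition valid_fill :: "nat \<Rightarrow> nat \<Rightarrow> (nat \<Rightarrow> real) \<Rightarrow> bool" where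
  "valid_fill n p a \<longleftrightarrow> 1 \<le> p \<and> p \<le> n \<and> (\<forall>i<n. 0 \<le> a i \<and> a i \<le> 1)
     \<and> (\<Sum>i<n. a i) = real p"

definition greedy_choice :: "nat \<Rightarrow> nat \<Rightarrow> (nat \<Rightarrow> real) \<Rightarrow> nat set \<Rightarrow> bool" where
  "greedy_choice n p g E \<longleftrightarrow> E \<subseteq> {..<n} \<and> card E = p
     \<and> (\<forall>i\<in>E. \<forall>j\<in>{..<n} - E. g j \<le> g i)"

fun filler_wins :: "nat \<Rightarrow> ((nat \<Rightarrow> real) \<Rightarrow> bool) \<Rightarrow> nat \<Rightarrow> (nat \<Rightarrow> real) \<Rightarrow> bool" where
  "filler_wins n G 0 f = G f"
| "filler_wins n G (Suc t) f =
     (G f \<or> (\<exists>p a. valid_fill n p a \<and>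
        (\<forall>E. greedy_choice n p (\<lambda>i. f i + a i) E \<longrightarrow>
             filler_wins n G t (\<lambda>i. f i + a i - (if i \<in> E then 1 else 0)))))"

definition count_fill :: "nat \<Rightarrow> (nat \<Rightarrow> real) \<Rightarrow> real \<Rightarrow> nat" where
  "count_fill n f x = card {i. i < n \<and> f i = x}"

end

theory Submission
  imports Defs
begin

text \<open>
  Splitting move: if 2s cups have fill x, the filler adds 1/2 to each of them and 1 to every
  other cup with fill above x - 1/2. The greedy emptier must then empty all cups of the second
  kind and exactly s of the first, so s cups end at x + 1/2, s at x - 1/2, and no other fill
  changes. Hence the fill histogram can be steered like a chip-firing configuration on the
  lattice of half-integers, each chip standing for u = m/(4k) cups, on top of an untouched
  remainder R. Firing the pile of 4k - 1 chips at fill 0 once leaves 2k - 1 chips at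
  fill 1/2 and at fill -1/2 with one chip left at 0; cascades of firings along the occupied
  interval then push one chip at a time outwards at both ends, until after O(k^3) rounds there
  are k chips, i.e. m/4 cups, at fill k/2. The argument runs backwards from the target:
  wins t c says that every state whose histogram is R + u c is won within t rounds.
\<close>

lemma filler_wins_Suc: "filler_wins n G t f \<Longrightarrow> filler_wins n G (Suc t) f"
proof (induction t arbitrary: f)
  case (Suc t)
  then show ?case by (simp only: filler_wins.simps) blast
qed simp

lemma filler_wins_mono:
  assumes "filler_wins n G t f" and "t \<le> t'"
  shows "filler_wins n G t' f"
  using assms(2) by (induction t' rule: dec_induct) (use assms(1) filler_wins_Suc in auto)

lemma greedy_choice_three_levels:
  fixes g :: "nat \<Rightarrow> real"
  assumes greedy: "greedy_choice n (card H + s) g E"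
    and sets: "A \<subseteq> {..<n}" "H \<subseteq> {..<n}" "A \<inter> H = {}" and s_le: "s \<le> card A"
    and above: "\<And>i. i \<in> H \<Longrightarrow> v < g i"
    and level: "\<And>i. i \<in> A \<Longrightarrow> g i = v"
    and below: "\<And>i. i < n \<Longrightarrow> i \<notin> A \<Longrightarrow> i \<notin> H \<Longrightarrow> g i < v"
  shows "H \<subseteq> E" "E \<subseteq> A \<union> H" "card (A \<inter> E) = s"
proof -
  have E: "E \<subseteq> {..<n}" "card E = card H + s"
    and top: "\<And>i j. i \<in> E \<Longrightarrow> j < n \<Longrightarrow> j \<notin> E \<Longrightarrow> g j \<le> g i"
    using greedy unfolding greedy_choice_def by auto
  have fin: "finite A" "finite H" "finite E"
    using sets E(1) by (auto intro: finite_subset)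
  show HE: "H \<subseteq> E"
  proof
    fix j assume "j \<in> H"
    show "j \<in> E"
    proof (rule ccontr)
      assume "j \<notin> E"
      have "E \<subseteq> H - {j}"
      proof
        fix i assume "i \<in> E"
        have "v < g i"
          using above[OF \<open>j \<in> H\<close>] top[OF \<open>i \<in> E\<close>, of j] sets(2) \<open>j \<in> H\<close> \<open>j \<notin> E\<close>
          by force
        moreover have "i < n" using E(1) \<open>i \<in> E\<close> by auto
        ultimately have "i \<in> H" using level below by fastforce
        then show "i \<in> H - {j}" using \<open>i \<in> E\<close> \<open>j \<notin> E\<close> by auto
      qed
      then have "card E \<le> card (H - {j})" by (intro card_mono) (use fin in auto)
      also have "\<dots> < card H" by (rule card_Diff1_less[OF fin(2) \<open>j \<in> H\<close>])
      finally show False using E(2) by simp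
    qed
  qed
  show EAH: "E \<subseteq> A \<union> H"
  proof
    fix i assume "i \<in> E"
    show "i \<in> A \<union> H"
    proof (rule ccontr)
      assume "i \<notin> A \<union> H"
      with \<open>i \<in> E\<close> have "g i < v" using below E(1) by auto
      then have "A \<subseteq> E" using top[OF \<open>i \<in> E\<close>] level sets by force
      with HE \<open>i \<in> E\<close> have "insert i (A \<union> H) \<subseteq> E" by auto
      then have "card (insert i (A \<union> H)) \<le> card E" by (intro card_mono) (use fin in auto)
      then show False
        using fin \<open>i \<notin> A \<union> H\<close> card_Un_disjoint[of A H] sets(3) E(2) s_le by simp
    qed
  qed
  have "E = (A \<inter> E) \<union> H" using HE EAH by auto
  then have "card E = card (A \<inter> E) + card H"
    using card_Un_disjoint[of "A \<inter> E" H] fin sets(3) by auto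
  then show "card (A \<inter> E) = s" using E(2) by simp
qed

lemma count_fill_change_on:
  assumes "A \<subseteq> {..<n}" and "\<And>i. i < n \<Longrightarrow> i \<notin> A \<Longrightarrow> g i = f i"
  shows "count_fill n g y + card {i \<in> A. f i = y} = count_fill n f y + card {i \<in> A. g i = y}"
proof -
  define Q where "Q = {i. i < n \<and> i \<notin> A \<and> f i = y}"
  have "count_fill n h y = card Q + card {i \<in> A. h i = y}"
    if "\<And>i. i < n \<Longrightarrow> i \<notin> A \<Longrightarrow> h i = f i" for h
  proof -
    have "{i. i < n \<and> h i = y} = Q \<union> {i \<in> A. h i = y}"
      using assms(1) that by (auto simp: Q_def)
    moreover have "finite {i \<in> A. h i = y}" using assms(1) finite_subset by fastforce
    moreover have "finite Q" "Q \<inter> {i \<in> A. h i = y} = {}" by (auto simp: Q_def)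
    ultimately show ?thesis unfolding count_fill_def by (simp add: card_Un_disjoint)
  qed
  from this[of g] this[of f] assms(2) show ?thesis by simp
qed

lemma split_round:
  fixes f :: "nat \<Rightarrow> real"
  assumes "1 \<le> s" and "2 * s \<le> count_fill n f x"
  obtains p a where "valid_fill n p a"
    and "\<And>E y. greedy_choice n p (\<lambda>i. f i + a i) E \<Longrightarrow>
      int (count_fill n (\<lambda>i. f i + a i - (if i \<in> E then 1 else 0)) y)
        = int (count_fill n f y)
          + int s * (of_bool (y = x + 1/2) + of_bool (y = x - 1/2) - 2 * of_bool (y = x))"
proof -
  obtain A where A: "A \<subseteq> {i. i < n \<and> f i = x}" "card A = 2 * s"
    using assms(2) unfolding count_fill_def by (meson obtain_subset_with_card_n)
  define H where "H = {i. i < n \<and> i \<notin> A \<and> x - 1/2 < f i}"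
  define a :: "nat \<Rightarrow> real" where "a i = (if i \<in> A then 1/2 else if i \<in> H then 1 else 0)" for i
  have sets: "A \<subseteq> {..<n}" "H \<subseteq> {..<n}" "A \<inter> H = {}" using A(1) by (auto simp: H_def)
  then have fin: "finite A" "finite H" by (auto intro: finite_subset)
  have "valid_fill n (card H + s) a"
  proof -
    have "(\<Sum>i<n. a i) = (\<Sum>i\<in>A. a i) + (\<Sum>i\<in>H. a i)"
      by (subst sum.union_disjoint[symmetric])
        (use fin sets in \<open>auto simp: a_def intro!: sum.mono_neutral_right\<close>)
    also have "(\<Sum>i\<in>H. a i) = (\<Sum>i\<in>H. 1)" using sets(3) by (intro sum.cong) (auto simp: a_def)
    also have "(\<Sum>i\<in>A. a i) + (\<Sum>i\<in>H. 1) = real (card H + s)" using A(2) by (simp add: a_def)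
    finally have sum: "(\<Sum>i<n. a i) = real (card H + s)" .
    have "card H + s \<le> card (A \<union> H)" using fin sets(3) A(2) by (simp add: card_Un_disjoint)
    also have "\<dots> \<le> n" using card_mono[of "{..<n}" "A \<union> H"] sets by auto
    finally show ?thesis using assms(1) sum by (auto simp: valid_fill_def a_def)
  qed
  moreover
  have "int (count_fill n (\<lambda>i. f i + a i - (if i \<in> E then 1 else 0)) y)
        = int (count_fill n f y)
          + int s * (of_bool (y = x + 1/2) + of_bool (y = x - 1/2) - 2 * of_bool (y = x))"
    if greedy: "greedy_choice n (card H + s) (\<lambda>i. f i + a i) E" for E y
  proof -
    define g where "g i = f i + a i - (if i \<in> E then 1 else 0)" for i
    have E: "H \<subseteq> E" "E \<subseteq> A \<union> H" "card (A \<inter> E) = s"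
      using greedy_choice_three_levels[OF greedy sets, of "x + 1/2"] A
      by (auto simp: a_def H_def)
    have "card (A - E) = s" using E(3) A(2) fin(1) card_Diff_subset_Int[of A E] by simp
    have "count_fill n g y + card {i \<in> A. f i = y} = count_fill n f y + card {i \<in> A. g i = y}"
      by (rule count_fill_change_on[OF sets(1)]) (use E in \<open>auto simp: g_def a_def\<close>)
    moreover have "card {i \<in> A. f i = y} = 2 * s * of_bool (y = x)"
    proof -
      have "{i \<in> A. f i = y} = (if y = x then A else {})" using A(1) by auto
      then show ?thesis using A(2) by simp
    qed
    moreover have "card {i \<in> A. g i = y} = s * of_bool (y = x + 1/2) + s * of_bool (y = x - 1/2)"
    proof -
      have "{i \<in> A. g i = y} = (if y = x + 1/2 then A - E else if y = x - 1/2 then A \<inter> E else {})"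
        using A(1) by (auto simp: g_def a_def)
      then show ?thesis using E(3) \<open>card (A - E) = s\<close> by auto
    qed
    ultimately show ?thesis unfolding g_def by (auto simp: of_bool_def split: if_splits)
  qed
  ultimately show ?thesis by (rule that)
qed

lemma filler_wins_split:
  fixes f :: "nat \<Rightarrow> real"
  assumes "1 \<le> s" and "2 * s \<le> count_fill n f x"
    and "\<And>g. (\<And>y. int (count_fill n g y) = int (count_fill n f y)
            + int s * (of_bool (y = x + 1/2) + of_bool (y = x - 1/2) - 2 * of_bool (y = x)))
          \<Longrightarrow> filler_wins n G t g"
  shows "filler_wins n G (Suc t) f"
  by (rule split_round[OF assms(1,2)]) (use assms(3) in \<open>simp only: filler_wins.simps, blast\<close>)

definition delta :: "int \<Rightarrow> int \<Rightarrow> int" where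
  "delta j l = of_bool (l = j)"

text \<open>Chip configurations are indexed by twice the fill: \<open>c l\<close> chips sit at fill \<open>l / 2\<close>.\<close>

definition on_halves :: "(int \<Rightarrow> int) \<Rightarrow> real \<Rightarrow> int" where
  "on_halves c y = (if of_int \<lfloor>2 * y\<rfloor> = 2 * y then c \<lfloor>2 * y\<rfloor> else 0)"

lemma on_halves_half [simp]: "on_halves c (of_int j / 2) = c j"
  by (simp add: on_halves_def)

lemma on_halves_fire:
  "on_halves (\<lambda>l. c l + w * (delta (j + 1) l + delta (j - 1) l - 2 * delta j l)) y
    = on_halves c y + w * (of_bool (y = of_int j / 2 + 1/2) + of_bool (y = of_int j / 2 - 1/2)
        - 2 * of_bool (y = of_int j / 2))"
proof (cases "of_int \<lfloor>2 * y\<rfloor> = 2 * y")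
  case True
  then obtain l where y: "y = of_int l / 2" by (metis nonzero_mult_div_cancel_left zero_neq_numeral)
  moreover have "of_int l / 2 = of_int j / 2 + (1/2 :: real) \<longleftrightarrow> l = j + 1"
    "of_int l / 2 = of_int j / 2 - (1/2 :: real) \<longleftrightarrow> l = j - 1"
    by (simp_all add: field_simps, linarith+)
  ultimately show ?thesis unfolding y on_halves_half by (simp add: delta_def)
next
  case False
  then have "2 * y \<noteq> of_int l" for l by (metis floor_of_int)
  from this[of "j + 1"] this[of "j - 1"] this[of j] False show ?thesis
    by (auto simp: on_halves_def field_simps)
qed

definition spread :: "nat \<Rightarrow> nat \<Rightarrow> int \<Rightarrow> int" where
  "spread K i l = (if \<bar>l\<bar> = int i then 2 * int K - int i else if \<bar>l\<bar> < int i then 1 else 0)"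

locale chip_firing =
  fixes n :: nat and G :: "(nat \<Rightarrow> real) \<Rightarrow> bool" and R :: "real \<Rightarrow> int" and u :: nat
  assumes R_nonneg: "0 \<le> R y" and u_pos: "0 < u"
begin

definition has_config :: "(nat \<Rightarrow> real) \<Rightarrow> (int \<Rightarrow> int) \<Rightarrow> bool" where
  "has_config g c \<longleftrightarrow> (\<forall>y. int (count_fill n g y) = R y + int u * on_halves c y)"

definition wins :: "nat \<Rightarrow> (int \<Rightarrow> int) \<Rightarrow> bool" where
  "wins t c \<longleftrightarrow> (\<forall>g. has_config g c \<longrightarrow> filler_wins n G t g)"

lemma has_config_count_fill:
  "has_config g c \<Longrightarrow> int u * c j \<le> int (count_fill n g (of_int j / 2))"
  using R_nonneg[of "of_int j / 2"] by (simp add: has_config_def)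

lemma wins_mono: "wins t c \<Longrightarrow> t \<le> t' \<Longrightarrow> wins t' c"
  unfolding wins_def using filler_wins_mono by blast

lemma wins_fire:
  assumes "1 \<le> w" and "2 * int w \<le> c j" and "wins t c'"
    and "\<And>l. c' l = c l + int w * (delta (j + 1) l + delta (j - 1) l - 2 * delta j l)"
  shows "wins (Suc t) c"
  unfolding wins_def
proof (intro allI impI)
  fix g assume g: "has_config g c"
  show "filler_wins n G (Suc t) g"
  proof (rule filler_wins_split[where s = "u * w" and x = "of_int j / 2"])
    show "1 \<le> u * w" using assms(1) u_pos by simp
    have "int (u * (2 * w)) \<le> int u * c j" using mult_left_mono[OF assms(2), of "int u"] by simp
    also have "\<dots> \<le> int (count_fill n g (of_int j / 2))" using g by (rule has_config_count_fill)
    finally have "u * (2 * w) \<le> count_fill n g (of_int j / 2)" by (simp only: of_nat_le_iff)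
    then show "2 * (u * w) \<le> count_fill n g (of_int j / 2)" by simp
  next
    fix g' assume g': "\<And>y. int (count_fill n g' y) = int (count_fill n g y) + int (u * w) *
      (of_bool (y = of_int j / 2 + 1/2) + of_bool (y = of_int j / 2 - 1/2)
        - 2 * of_bool (y = of_int j / 2))"
    have c': "c' = (\<lambda>l. c l + int w * (delta (j + 1) l + delta (j - 1) l - 2 * delta j l))"
      using assms(4) by auto
    have "has_config g' c'"
      unfolding has_config_def c' on_halves_fire using g' g
      by (simp add: has_config_def algebra_simps)
    then show "filler_wins n G t g'" using assms(3) by (simp add: wins_def)
  qed
qed

lemma wins_cascade:
  assumes "2 \<le> c T" and "\<And>l. T - int d \<le> l \<Longrightarrow> l < T \<Longrightarrow> 1 \<le> c l" and "wins t c'"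
    and "\<And>l. c' l = c l + delta (T + 1) l - delta T l - delta (T - int d) l + delta (T - int d - 1) l"
  shows "wins (t + Suc d) c"
  using assms(2-4)
proof (induction d arbitrary: t c')
  case 0
  have "wins (Suc t) c"
    by (rule wins_fire[where w = 1 and j = T, OF _ _ "0.prems"(2)])
      (use assms(1) "0.prems"(3) in \<open>auto simp: delta_def\<close>)
  then show ?case by simp
next
  case (Suc d)
  define c'' where
    "c'' l = c l + delta (T + 1) l - delta T l - delta (T - int d) l + delta (T - int d - 1) l" for l
  have "wins (Suc t) c''"
  proof (rule wins_fire[where w = 1 and j = "T - int d - 1", OF _ _ "Suc.prems"(2)])
    show "2 * int 1 \<le> c'' (T - int d - 1)"
      using "Suc.prems"(1)[of "T - int d - 1"] by (simp add: c''_def delta_def)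
  qed (use "Suc.prems"(3) in \<open>auto simp: c''_def delta_def\<close>)
  then have "wins (Suc t + Suc d) c"
    by (rule Suc.IH[rotated]) (use "Suc.prems"(1) in \<open>auto simp: c''_def\<close>)
  then show ?case by simp
qed

lemma wins_spread_step:
  assumes "1 \<le> i" and "i < K" and "wins t (spread K (Suc i))"
  shows "wins (t + 4 * K * K) (spread K i)"
proof -
  define Y where "Y j l = spread K (Suc i) l
    - int j * (delta (int i + 1) l - delta (int i) l - delta (- int i) l + delta (- int i - 1) l)"
    for j :: nat and l
  have Y: "wins (t + j * (2 * i + 1)) (Y j)" if "j \<le> 2 * K - i - 1" for j
    using that
  proof (induction j)
    case 0
    show ?case using assms(3) by (simp add: Y_def fun_eq_iff)
  next
    case (Suc j)
    have "wins (t + j * (2 * i + 1) + Suc (2 * i)) (Y (Suc j))"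
    proof (rule wins_cascade[where T = "int i" and d = "2 * i"])
      show "wins (t + j * (2 * i + 1)) (Y j)" using Suc by simp
    qed (use assms(1) in \<open>auto simp: Y_def spread_def delta_def\<close>)
    then show ?case by (simp add: algebra_simps)
  qed
  define N where "N = 2 * K - i - 1"
  have "Y N = spread K i"
    using assms(1,2) by (auto simp: Y_def spread_def delta_def N_def fun_eq_iff)
  moreover have "N * (2 * i + 1) \<le> 2 * K * (2 * K)"
    using assms(2) by (intro mult_le_mono) (auto simp: N_def)
  ultimately show ?thesis
    using Y[of N] by (auto simp: N_def intro: wins_mono)
qed

lemma wins_spread:
  assumes "1 \<le> i" and "i \<le> K" and "wins t (spread K K)"
  shows "wins (t + (K - i) * (4 * K * K)) (spread K i)"
  using assms(2,1)
proof (induction i rule: inc_induct)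
  case base
  show ?case using assms(3) by simp
next
  case (step i)
  then have "wins (t + (K - Suc i) * (4 * K * K) + 4 * K * K) (spread K i)"
    by (intro wins_spread_step) simp_all
  moreover have "K - i = Suc (K - Suc i)" using step.hyps(2) by simp
  then have "(K - i) * (4 * K * K) = (K - Suc i) * (4 * K * K) + 4 * K * K" by simp
  ultimately show ?case by (simp only: add.assoc)
qed

lemma wins_pile:
  assumes "0 < K" and "wins 0 (spread K K)"
  shows "wins (5 * K ^ 3) (\<lambda>l. (4 * int K - 1) * delta 0 l)"
proof -
  have "wins ((K - 1) * (4 * K * K)) (spread K 1)"
    using wins_spread[of 1 K 0] assms by simp
  then have "wins (Suc ((K - 1) * (4 * K * K))) (\<lambda>l. (4 * int K - 1) * delta 0 l)"
    by (rule wins_fire[where w = "2 * K - 1" and j = 0, rotated 2])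
      (use assms(1) in \<open>auto simp: spread_def delta_def\<close>)
  moreover have "Suc ((K - 1) * (4 * K * K)) \<le> 5 * K ^ 3"
  proof -
    have "Suc ((K - 1) * (4 * K * K)) \<le> K * (4 * K * K)" using assms(1) by (cases K) auto
    then show ?thesis by (simp add: power3_eq_cube)
  qed
  ultimately show ?thesis by (rule wins_mono)
qed

lemma count_fill_spread:
  assumes "has_config g (spread K K)"
  shows "u * K \<le> count_fill n g (real K / 2)"
proof -
  have "int (u * K) \<le> int (count_fill n g (real K / 2))"
    using has_config_count_fill[OF assms, of "int K"] by (simp add: spread_def)
  then show ?thesis by (simp only: of_nat_le_iff)
qed

end

theorem lemma5p4:
  "\<exists>C::real. \<forall>(n::nat) (k::nat) (m::nat) (f::nat \<Rightarrow> real).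
     0 < k \<longrightarrow> 0 < m \<longrightarrow> (4 * k) dvd m \<longrightarrow> m \<le> n \<longrightarrow> m \<le> count_fill n f 0 \<longrightarrow>
     filler_wins n (\<lambda>g. real m / 4 \<le> real (count_fill n g (real k / 2)))
       (nat \<lfloor>C * real k ^ 3\<rfloor>) f"
proof (intro exI[of _ 5] allI impI)
  fix n k m :: nat and f :: "nat \<Rightarrow> real"
  assume "0 < k" "0 < m" "(4 * k) dvd m" "m \<le> n" and count_f: "m \<le> count_fill n f 0"
  then obtain u where m: "m = 4 * k * u" and "0 < u" by auto
  define G where "G g \<longleftrightarrow> real m / 4 \<le> real (count_fill n g (real k / 2))" for g
  define c0 where "c0 l = (4 * int k - 1) * delta 0 l" for l
  define R where "R y = int (count_fill n f y) - int u * on_halves c0 y" for y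
  interpret chip_firing n G R u
  proof
    have "int (4 * k * u) \<le> int (count_fill n f 0)" using count_f m by (simp only: of_nat_le_iff)
    then show "0 \<le> R y" for y
      by (auto simp: R_def c0_def delta_def on_halves_def algebra_simps)
  qed fact
  have "wins 0 (spread k k)"
    using count_fill_spread[of _ k, THEN of_nat_mono[where 'a = real]]
    by (auto simp: wins_def G_def m mult.commute)
  then have "wins (5 * k ^ 3) c0"
    unfolding c0_def[abs_def] using \<open>0 < k\<close> by (rule wins_pile[rotated])
  moreover have "has_config f c0" by (simp add: has_config_def R_def)
  moreover have "nat \<lfloor>5 * real k ^ 3\<rfloor> = 5 * k ^ 3"
    by (metis floor_of_nat nat_int of_nat_numeral of_nat_mult of_nat_power)
  ultimately show "filler_wins n (\<lambda>g. real m / 4 \<le> real (count_fill n g (real k / 2)))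
      (nat \<lfloor>5 * real k ^ 3\<rfloor>) f"
    unfolding wins_def by (simp add: G_def[abs_def])
qed

end
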